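(* Suppose $\underline{\mathcal Z}\subseteq\ell^1(\mathcal Z)$. Then a linear functional $H:\underline{\mathcal Z}\to\mathcal Y$ has the $1$-weighted FMP if and only if it has a (proper) convolution representation $\underline\kappa$ satisfying $\lim_{t\to-\infty}\|\kappa_t\|_{op}=0$.
   Context: Let $(\mathcal Z,\|\cdot\|)$ and $(\mathcal Y,\|\cdot\|_{\mathcal Y})$ be normed vector spaces over $\mathbb R$ and $\mathcal B=\{z\in\mathcal Z:\|z\|\le1\}$. Let $\mathbb Z_-=\{0,-1,-2,\dots\}$; elements of $\mathcal Z^{\mathbb Z_-}$ are sequences $\underline z=(z_t)_{t\le0}$. For $t\in\mathbb Z_-$, $\delta^t:\mathcal Z\to\mathcal Z^{\mathbb Z_-}$ maps $z$ to the sequence whose entry at time $t$ is $z$ and all other entries are $0$. Standing assumption: $\underline{\mathcal Z}\subseteq\mathcal Z^{\mathbb Z_-}$ is a set such that (a) $\underline{\mathcal Z}$ is convex and $\underline{\mathcal Z}=\{-\underline z:\underline z\in\underline{\mathcal Z}\}$; (b) $\delta^t(\mathcal B)\subseteq\underline{\mathcal Z}$ for all $t\in\mathbb Z_-$; (c) for every $\underline z\in\underline{\mathcal Z}$ and every $J\subseteq\mathbb Z_-$, the sequence $\sum_{t\in J}\delta^t(z_t)$ (equal to $z_t$ at times $t\in J$ and $0$ elsewhere) belongs to $\underline{\mathcal Z}$. A functional $H:\underline{\mathcal Z}\to\mathcal Y$ is linear if it is the restriction of a linear map defined on the linear span of $\underline{\mathcal Z}$. $L(\mathcal Z,\mathcal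 Y)$ is the space of continuous linear maps $\mathcal Z\to\mathcal Y$ with operator norm $\|\cdot\|_{op}$. $H$ has a (proper) convolution representation if there is $\underline\kappa\in L(\mathcal Z,\mathcal Y)^{\mathbb Z_-}$ with $H(\underline z)=\lim_{T\to-\infty}\sum_{t=T}^0\kappa_t(z_t)$ and $\sum_{t\le0}\|\kappa_t(z_t)\|_{\mathcal Y}<\infty$ for all $\underline z\in\underline{\mathcal Z}$. $\ell^1(\mathcal Z)$ is the set of $\underline z$ with $\|\underline z\|_1=\sum_{t\le0}\|z_t\|<\infty$. A weighting sequence is a monotone $\underline w\in(0,1]^{\mathbb Z_-}$ with $w_t\to0$ as $t\to-\infty$; $\|\underline z\|_{1,\underline w}=\sum_{t\le0}w_t\|z_t\|$. $H$ has the $1$-weighted FMP if $\underline{\mathcal Z}\subseteq\ell^1(\mathcal Z)$ and there exists a weighting sequence $\underline w$ such that $H$ is continuous for the topology induced by $\|\cdot\|_{1,\underline w}$. *)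

theory Defs
  imports "HOL-Analysis.Analysis"
begin

text \<open>Time index convention: a left-infinite sequence (z_t) for t in {0,-1,-2,...}
  is represented as a function nat => 'z, where the value at n :: nat is z_{-n}.\<close>

definition delta_seq :: "nat \<Rightarrow> 'z::real_normed_vector \<Rightarrow> (nat \<Rightarrow> 'z)" where
  "delta_seq t z = (\<lambda>n. if n = t then z else 0)"

definition standing_assumption :: "(nat \<Rightarrow> 'z::real_normed_vector) set \<Rightarrow> bool" where
  "standing_assumption Zs \<longleftrightarrow>
     (\<forall>x\<in>Zs. \<forall>y\<in>Zs. \<forall>u::real. 0 \<le> u \<and> u \<le> 1 \<longrightarrow> (\<lambda>n. u *\<^sub>R x n + (1 - u) *\<^sub>R y n) \<in> Zs)
   \<and> (\<forall>z\<in>Zs. (\<lambda>n. - z n) \<in> Zs)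
   \<and> (\<forall>t z. norm z \<le> 1 \<longrightarrow> delta_seq t z \<in> Zs)
   \<and> (\<forall>z\<in>Zs. \<forall>J::nat set. (\<lambda>n. if n \<in> J then z n else 0) \<in> Zs)"

inductive_set seq_span :: "(nat \<Rightarrow> 'z::real_vector) set \<Rightarrow> (nat \<Rightarrow> 'z) set"
  for Zs :: "(nat \<Rightarrow> 'z) set" where
  span_base: "z \<in> Zs \<Longrightarrow> z \<in> seq_span Zs"
| span_zero: "(\<lambda>n. 0) \<in> seq_span Zs"
| span_add: "x \<in> seq_span Zs \<Longrightarrow> y \<in> seq_span Zs \<Longrightarrow> (\<lambda>n. x n + y n) \<in> seq_span Zs"
| span_scale: "x \<in> seq_span Zs \<Longrightarrow> (\<lambda>n. c *\<^sub>R x n) \<in> seq_span Zs"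

definition linear_functional ::
  "(nat \<Rightarrow> 'z::real_vector) set \<Rightarrow> ((nat \<Rightarrow> 'z) \<Rightarrow> 'y::real_vector) \<Rightarrow> bool" where
  "linear_functional Zs H \<longleftrightarrow>
     (\<exists>L. (\<forall>x\<in>seq_span Zs. \<forall>y\<in>seq_span Zs. L (\<lambda>n. x n + y n) = L x + L y)
        \<and> (\<forall>c. \<forall>x\<in>seq_span Zs. L (\<lambda>n. c *\<^sub>R x n) = c *\<^sub>R L x)
        \<and> (\<forall>z\<in>Zs. H z = L z))"

definition in_ell1 :: "(nat \<Rightarrow> 'z::real_normed_vector) \<Rightarrow> bool" where
  "in_ell1 z \<longleftrightarrow> summable (\<lambda>n. norm (z n))"

definition convolution_rep ::
  "(nat \<Rightarrow> 'z::real_normed_vector) set \<Rightarrow> ((nat \<Rightarrow> 'z) \<Rightarrow> 'y::real_normed_vector)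
    \<Rightarrow> (nat \<Rightarrow> ('z \<Rightarrow>\<^sub>L 'y)) \<Rightarrow> bool" where
  "convolution_rep Zs H \<kappa> \<longleftrightarrow>
     (\<forall>z\<in>Zs. (\<lambda>N. \<Sum>n\<le>N. blinfun_apply (\<kappa> n) (z n)) \<longlonglongrightarrow> H z
            \<and> summable (\<lambda>n. norm (blinfun_apply (\<kappa> n) (z n))))"

definition weighting_seq :: "(nat \<Rightarrow> real) \<Rightarrow> bool" where
  "weighting_seq w \<longleftrightarrow> (mono w \<or> antimono w) \<and> (\<forall>n. 0 < w n \<and> w n \<le> 1) \<and> w \<longlonglongrightarrow> 0"

definition weighted_norm1 :: "(nat \<Rightarrow> real) \<Rightarrow> (nat \<Rightarrow> 'z::real_normed_vector) \<Rightarrow> real" where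
  "weighted_norm1 w z = (\<Sum>n. w n * norm (z n))"

definition FMP1 ::
  "(nat \<Rightarrow> 'z::real_normed_vector) set \<Rightarrow> ((nat \<Rightarrow> 'z) \<Rightarrow> 'y::real_normed_vector) \<Rightarrow> bool" where
  "FMP1 Zs H \<longleftrightarrow> (\<forall>z\<in>Zs. in_ell1 z) \<and>
     (\<exists>w. weighting_seq w \<and>
        (\<forall>z\<in>Zs. \<forall>e>0. \<exists>d>0. \<forall>z'\<in>Zs.
            weighted_norm1 w (\<lambda>n. z' n - z n) < d \<longrightarrow> norm (H z' - H z) < e))"

end

theory Submission
  imports Defs
begin

text \<open>If \<open>\<parallel>\<kappa>\<^sub>t\<parallel> \<rightarrow> 0\<close>, the tail suprema of \<open>\<parallel>\<kappa>\<^sub>t\<parallel>\<close>, padded by \<open>1/(1-t)\<close> to make them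
  positive and normalised, form a weighting sequence \<open>w\<close> with \<open>\<parallel>\<kappa>\<^sub>t\<parallel> \<le> C w\<^sub>t\<close>; then
  \<open>\<parallel>H z' - H z\<parallel> \<le> C \<parallel>z' - z\<parallel>\<^sub>1\<^sub>,\<^sub>w\<close>.
  Conversely the kernel is \<open>\<kappa>\<^sub>t = H \<circ> \<delta>\<^sup>t\<close>, extended linearly. Since
  \<open>\<parallel>\<delta>\<^sup>t(x)\<parallel>\<^sub>1\<^sub>,\<^sub>w = w\<^sub>t \<parallel>x\<parallel>\<close>, continuity of \<open>H\<close> at \<open>0\<close> bounds all \<open>\<kappa>\<^sub>t\<close> uniformly and makes
  \<open>\<kappa>\<^sub>t\<close> small as soon as \<open>w\<^sub>t\<close> is small. The partial convolution sums are the values of \<open>H\<close>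
  at the truncations of \<open>z\<close>, which converge to \<open>z\<close> in the weighted norm because their
  distance to \<open>z\<close> is a tail of a convergent series; continuity at \<open>z\<close> finishes the proof.\<close>

definition weighted_continuous ::
  "(nat \<Rightarrow> real) \<Rightarrow> (nat \<Rightarrow> 'z::real_normed_vector) set \<Rightarrow> ((nat \<Rightarrow> 'z) \<Rightarrow> 'y::real_normed_vector) \<Rightarrow> bool"
  where "weighted_continuous w Zs H \<longleftrightarrow>
    (\<forall>z\<in>Zs. \<forall>e>0. \<exists>d>0. \<forall>z'\<in>Zs. weighted_norm1 w (\<lambda>n. z' n - z n) < d \<longrightarrow> norm (H z' - H z) < e)"

lemma FMP1_iff:
  "FMP1 Zs H \<longleftrightarrow> (\<forall>z\<in>Zs. in_ell1 z) \<and> (\<exists>w. weighting_seq w \<and> weighted_continuous w Zs H)"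
  by (simp add: FMP1_def weighted_continuous_def)

definition linear_on_span :: "(nat \<Rightarrow> 'z::real_vector) set \<Rightarrow> ((nat \<Rightarrow> 'z) \<Rightarrow> 'y::real_vector) \<Rightarrow> bool"
  where "linear_on_span Zs L \<longleftrightarrow>
    (\<forall>x\<in>seq_span Zs. \<forall>y\<in>seq_span Zs. L (\<lambda>n. x n + y n) = L x + L y) \<and>
    (\<forall>c. \<forall>x\<in>seq_span Zs. L (\<lambda>n. c *\<^sub>R x n) = c *\<^sub>R L x)"

lemma linear_functional_iff:
  "linear_functional Zs H \<longleftrightarrow> (\<exists>L. linear_on_span Zs L \<and> (\<forall>z\<in>Zs. H z = L z))"
  by (simp add: linear_functional_def linear_on_span_def)

definition seq_trunc :: "nat \<Rightarrow> (nat \<Rightarrow> 'z::zero) \<Rightarrow> nat \<Rightarrow> 'z"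
  where "seq_trunc N z = (\<lambda>n. if n \<le> N then z n else 0)"

lemma weighting_seq_pos: "weighting_seq w \<Longrightarrow> 0 < w n"
  and weighting_seq_le_1: "weighting_seq w \<Longrightarrow> w n \<le> 1"
  by (simp_all add: weighting_seq_def)

lemma in_ell1_diff: "in_ell1 z \<Longrightarrow> in_ell1 z' \<Longrightarrow> in_ell1 (\<lambda>n. z' n - z n)"
  unfolding in_ell1_def
  by (rule summable_comparison_test'[of "\<lambda>n. norm (z' n) + norm (z n)" 0])
    (auto intro: summable_add norm_triangle_ineq4)

lemma summable_weighted_norm:
  assumes "weighting_seq w" "in_ell1 z"
  shows "summable (\<lambda>n. w n * norm (z n))"
proof (rule summable_comparison_test'[of "\<lambda>n. norm (z n)" 0])
  show "summable (\<lambda>n. norm (z n))" using assms(2) by (simp add: in_ell1_def)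
  show "norm (w n * norm (z n)) \<le> norm (z n)" for n
    using weighting_seq_pos[OF assms(1), of n] weighting_seq_le_1[OF assms(1), of n]
    by (simp add: abs_mult mult_left_le_one_le)
qed

section \<open>Vanishing kernels give fading memory\<close>

lemma antimono_majorant_of_null_seq:
  fixes a :: "nat \<Rightarrow> real"
  assumes "a \<longlonglongrightarrow> 0"
  obtains s where "antimono s" "s \<longlonglongrightarrow> 0" "\<And>n. \<bar>a n\<bar> \<le> s n"
proof -
  define s where "s n = (SUP m\<in>{n..}. \<bar>a m\<bar>)" for n
  obtain K where K: "\<And>n. \<bar>a n\<bar> \<le> K"
    using convergent_imp_Bseq[OF convergentI[OF assms]] by (auto simp: Bseq_def)
  have bdd: "bdd_above ((\<lambda>m. \<bar>a m\<bar>) ` A)" for A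
    using K by (intro bdd_aboveI2[of _ _ K]) auto
  have s_ge: "\<bar>a n\<bar> \<le> s n" for n
    unfolding s_def by (rule cSUP_upper[OF _ bdd]) auto
  have "antimono s"
    unfolding antimono_iff_le_Suc s_def by (auto intro!: cSUP_subset_mono bdd)
  moreover have "s \<longlonglongrightarrow> 0"
  proof (rule LIMSEQ_I)
    fix r :: real
    assume "0 < r"
    then obtain N where N: "\<And>m. m \<ge> N \<Longrightarrow> \<bar>a m\<bar> < r / 2"
      using LIMSEQ_D[OF assms, of "r / 2"] by auto
    have "s n \<le> r / 2" if "n \<ge> N" for n
      unfolding s_def using N that by (intro cSUP_least) (auto intro: less_imp_le)
    then have "norm (s n - 0) < r" if "n \<ge> N" for n
      using that s_ge[of n] \<open>0 < r\<close> by fastforce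
    then show "\<exists>N. \<forall>n\<ge>N. norm (s n - 0) < r" by blast
  qed
  ultimately show ?thesis
    using s_ge that by blast
qed

lemma weighting_seq_dominating_null_seq:
  fixes a :: "nat \<Rightarrow> real"
  assumes "a \<longlonglongrightarrow> 0"
  obtains w C where "weighting_seq w" "0 < C" "\<And>n. \<bar>a n\<bar> \<le> C * w n"
proof -
  obtain s where s_anti: "antimono s" and s_0: "s \<longlonglongrightarrow> 0" and s_ge: "\<And>n. \<bar>a n\<bar> \<le> s n"
    using antimono_majorant_of_null_seq[OF assms] by blast
  have s_nonneg: "0 \<le> s n" for n
    using s_ge[of n] by linarith
  define C where "C = s 0 + 1"
  define w where "w n = (s n + inverse (real (Suc n))) / C" for n
  have C_pos: "0 < C"
    using s_nonneg[of 0] by (simp add: C_def)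
  have "0 < w n" for n
    using s_nonneg[of n] C_pos by (simp add: w_def add_nonneg_pos)
  moreover have "w n \<le> 1" for n
  proof -
    have "s n + inverse (real (Suc n)) \<le> C"
      using antimonoD[OF s_anti, of 0 n] unfolding C_def by (intro add_mono) (auto simp: inverse_le_1_iff)
    then show ?thesis using C_pos by (simp add: w_def)
  qed
  moreover have "antimono w"
    unfolding antimono_iff_le_Suc w_def
    using antimonoD[OF s_anti] C_pos by (auto intro!: divide_right_mono add_mono simp: inverse_le_iff_le)
  moreover have "w \<longlonglongrightarrow> 0"
    unfolding w_def[abs_def] by (intro tendsto_divide_zero tendsto_add_zero s_0 LIMSEQ_inverse_real_of_nat)
  ultimately have "weighting_seq w"
    by (simp add: weighting_seq_def)
  moreover have "\<bar>a n\<bar> \<le> C * w n" for n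
    using s_ge[of n] C_pos by (simp add: w_def add_increasing2)
  ultimately show ?thesis using C_pos that by blast
qed

text \<open>The library's \<open>summable_norm\<close> needs a Banach space; here the codomain is only normed.\<close>

lemma norm_sums_le:
  fixes f :: "nat \<Rightarrow> 'a::real_normed_vector"
  assumes "f sums s" "summable g" "\<And>n. norm (f n) \<le> g n"
  shows "norm s \<le> suminf g"
proof (rule LIMSEQ_le_const2[OF tendsto_norm[OF assms(1)[unfolded sums_def]]])
  have "norm (\<Sum>i<n. f i) \<le> (\<Sum>i<n. g i)" for n
    by (rule order_trans[OF norm_sum sum_mono[OF assms(3)]])
  also have "(\<Sum>i<n. g i) \<le> suminf g" for n
    using assms(2,3) by (intro sum_le_suminf) (auto intro: order_trans[OF norm_ge_zero])
  finally show "\<exists>N. \<forall>n\<ge>N. norm (\<Sum>i<n. f i) \<le> suminf g" by blast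
qed

lemma convolution_rep_sums: "convolution_rep Zs H \<kappa> \<Longrightarrow> z \<in> Zs \<Longrightarrow> (\<lambda>n. \<kappa> n (z n)) sums H z"
  by (simp add: convolution_rep_def sums_def_le)

lemma convolution_rep_lipschitz:
  assumes conv: "convolution_rep Zs H \<kappa>" and \<kappa>_le: "\<And>n. norm (\<kappa> n) \<le> C * w n"
    and w: "weighting_seq w" and l1: "\<forall>z\<in>Zs. in_ell1 z" and "z \<in> Zs" "z' \<in> Zs"
  shows "norm (H z' - H z) \<le> C * weighted_norm1 w (\<lambda>n. z' n - z n)"
proof -
  define d where "d n = z' n - z n" for n
  have sums: "(\<lambda>n. \<kappa> n (d n)) sums (H z' - H z)"
    using sums_diff[OF convolution_rep_sums[OF conv \<open>z' \<in> Zs\<close>] convolution_rep_sums[OF conv \<open>z \<in> Zs\<close>]]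
    by (simp add: d_def blinfun.diff_right)
  have summable_w: "summable (\<lambda>n. w n * norm (d n))"
    using summable_weighted_norm[OF w in_ell1_diff[of z z']] l1 \<open>z \<in> Zs\<close> \<open>z' \<in> Zs\<close>
    by (simp add: d_def)
  have le: "norm (\<kappa> n (d n)) \<le> C * (w n * norm (d n))" for n
    using norm_blinfun[of "\<kappa> n" "d n"] mult_right_mono[OF \<kappa>_le norm_ge_zero, of n "d n"]
    by (simp add: mult.assoc)
  have "norm (H z' - H z) \<le> (\<Sum>n. C * (w n * norm (d n)))"
    by (rule norm_sums_le[OF sums summable_mult[OF summable_w] le])
  also have "\<dots> = C * weighted_norm1 w d"
    by (simp add: weighted_norm1_def suminf_mult[OF summable_w])
  finally show ?thesis by (simp add: d_def[abs_def])
qed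

lemma lipschitz_imp_weighted_continuous:
  assumes "0 < C"
    and "\<And>z z'. z \<in> Zs \<Longrightarrow> z' \<in> Zs \<Longrightarrow> norm (H z' - H z) \<le> C * weighted_norm1 w (\<lambda>n. z' n - z n)"
  shows "weighted_continuous w Zs H"
  unfolding weighted_continuous_def
proof (intro ballI allI impI exI[of _ "e / C" for e] conjI)
  fix z z' e
  assume "z \<in> Zs" "z' \<in> Zs" "0 < (e::real)" "weighted_norm1 w (\<lambda>n. z' n - z n) < e / C"
  have "norm (H z' - H z) \<le> C * weighted_norm1 w (\<lambda>n. z' n - z n)"
    using assms(2) \<open>z \<in> Zs\<close> \<open>z' \<in> Zs\<close> .
  also have "\<dots> < e"
    using \<open>weighted_norm1 w (\<lambda>n. z' n - z n) < e / C\<close> \<open>0 < C\<close> by (simp add: pos_less_divide_eq mult.commute)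
  finally show "norm (H z' - H z) < e" .
qed (use assms in simp_all)

lemma convolution_rep_imp_FMP1:
  assumes l1: "\<forall>z\<in>Zs. in_ell1 z" and conv: "convolution_rep Zs H \<kappa>"
    and \<kappa>_0: "(\<lambda>n. norm (\<kappa> n)) \<longlonglongrightarrow> 0"
  shows "FMP1 Zs H"
proof -
  obtain w C where w: "weighting_seq w" and "0 < C" and "\<And>n. \<bar>norm (\<kappa> n)\<bar> \<le> C * w n"
    using weighting_seq_dominating_null_seq[OF \<kappa>_0] by blast
  then have "weighted_continuous w Zs H"
    by (intro lipschitz_imp_weighted_continuous convolution_rep_lipschitz[OF conv _ w l1]) auto
  with l1 w show ?thesis by (auto simp: FMP1_iff)
qed

section \<open>Fading memory gives a vanishing kernel\<close>

lemma delta_seq_in_Zs: "standing_assumption Zs \<Longrightarrow> norm x \<le> 1 \<Longrightarrow> delta_seq n x \<in> Zs"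
  by (simp add: standing_assumption_def)

lemma zero_seq_in_Zs: "standing_assumption Zs \<Longrightarrow> (\<lambda>n. 0) \<in> Zs"
  using delta_seq_in_Zs[of Zs 0 0] by (simp add: delta_seq_def)

lemma seq_trunc_in_Zs:
  assumes "standing_assumption Zs" "z \<in> Zs"
  shows "seq_trunc N z \<in> Zs"
proof -
  have "(\<lambda>n. if n \<in> {..N} then z n else 0) \<in> Zs"
    using assms unfolding standing_assumption_def by blast
  then show ?thesis by (simp add: seq_trunc_def)
qed

lemma delta_seq_in_seq_span:
  assumes "standing_assumption Zs"
  shows "delta_seq n x \<in> seq_span Zs"
proof -
  have "delta_seq n x = (\<lambda>m. norm x *\<^sub>R delta_seq n (sgn x) m)"
    by (cases "x = 0") (auto simp: delta_seq_def fun_eq_iff sgn_div_norm)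
  moreover have "delta_seq n (sgn x) \<in> Zs"
    using assms by (rule delta_seq_in_Zs) (simp add: norm_sgn)
  ultimately show ?thesis
    by (simp add: seq_span.span_base seq_span.span_scale)
qed

lemma linear_on_span_zero: "linear_on_span Zs L \<Longrightarrow> L (\<lambda>n. 0) = 0"
  using seq_span.span_zero[of Zs] by (fastforce simp: linear_on_span_def)

lemma linear_on_span_delta_seq:
  fixes L :: "(nat \<Rightarrow> 'z::real_normed_vector) \<Rightarrow> 'y::real_vector"
  assumes "standing_assumption Zs" "linear_on_span Zs L"
  shows "linear (\<lambda>x. L (delta_seq n x))"
proof (rule linearI)
  fix a b :: 'z
  have "delta_seq n (a + b) = (\<lambda>m. delta_seq n a m + delta_seq n b m)"
    by (auto simp: delta_seq_def fun_eq_iff)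
  then show "L (delta_seq n (a + b)) = L (delta_seq n a) + L (delta_seq n b)"
    using assms(2) delta_seq_in_seq_span[OF assms(1)] by (simp add: linear_on_span_def)
next
  fix c :: real and a :: 'z
  have "delta_seq n (c *\<^sub>R a) = (\<lambda>m. c *\<^sub>R delta_seq n a m)"
    by (auto simp: delta_seq_def fun_eq_iff)
  then show "L (delta_seq n (c *\<^sub>R a)) = c *\<^sub>R L (delta_seq n a)"
    using assms(2) delta_seq_in_seq_span[OF assms(1)] by (simp add: linear_on_span_def)
qed

lemma linear_on_span_seq_trunc:
  assumes "standing_assumption Zs" "linear_on_span Zs L" "z \<in> Zs"
  shows "L (seq_trunc N z) = (\<Sum>n\<le>N. L (delta_seq n (z n)))"
proof (induction N)
  case 0
  have "seq_trunc 0 z = delta_seq 0 (z 0)"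
    by (auto simp: seq_trunc_def delta_seq_def)
  then show ?case by simp
next
  case (Suc N)
  have "seq_trunc (Suc N) z = (\<lambda>n. seq_trunc N z n + delta_seq (Suc N) (z (Suc N)) n)"
    by (auto simp: seq_trunc_def delta_seq_def)
  then have "L (seq_trunc (Suc N) z) = L (seq_trunc N z) + L (delta_seq (Suc N) (z (Suc N)))"
    using assms(2) seq_span.span_base[OF seq_trunc_in_Zs[OF assms(1,3)]] delta_seq_in_seq_span[OF assms(1)]
    by (simp add: linear_on_span_def)
  with Suc.IH show ?case by simp
qed

lemma weighted_norm1_delta_seq: "weighted_norm1 w (delta_seq n x) = w n * norm x"
proof -
  have "(\<lambda>m. w m * norm (delta_seq n x m)) = (\<lambda>m. if m = n then w n * norm x else 0)"
    by (auto simp: delta_seq_def)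
  then show ?thesis
    using sums_single[of n "\<lambda>_. w n * norm x"] by (simp add: weighted_norm1_def sums_iff)
qed

lemma weighted_norm1_seq_trunc_tendsto:
  assumes "weighting_seq w" "in_ell1 z"
  shows "(\<lambda>N. weighted_norm1 w (\<lambda>n. seq_trunc N z n - z n)) \<longlonglongrightarrow> 0"
proof -
  define g where "g n = w n * norm (z n)" for n
  have g: "summable g"
    unfolding g_def[abs_def] using assms by (rule summable_weighted_norm)
  have "(\<lambda>n. w n * norm (seq_trunc N z n - z n)) sums (suminf g - (\<Sum>n\<le>N. g n))" for N
  proof -
    have "(\<lambda>n. w n * norm (seq_trunc N z n - z n)) = (\<lambda>n. g n - (if n \<in> {..N} then g n else 0))"
      by (auto simp: seq_trunc_def g_def)
    then show ?thesis
      using sums_diff[OF summable_sums[OF g] sums_If_finite_set[of "{..N}" g]] by simp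
  qed
  then have "weighted_norm1 w (\<lambda>n. seq_trunc N z n - z n) = suminf g - (\<Sum>n\<le>N. g n)" for N
    by (simp add: weighted_norm1_def sums_iff)
  moreover have "(\<lambda>N. suminf g - (\<Sum>n\<le>N. g n)) \<longlonglongrightarrow> 0"
    using tendsto_diff[OF tendsto_const summable_LIMSEQ'[OF g], of "suminf g"] by simp
  ultimately show ?thesis by simp
qed

lemma weighted_continuous_tendsto:
  assumes "weighted_continuous w Zs H" "z \<in> Zs" "\<And>N. x N \<in> Zs"
    and "(\<lambda>N. weighted_norm1 w (\<lambda>n. x N n - z n)) \<longlonglongrightarrow> 0"
  shows "(\<lambda>N. H (x N)) \<longlonglongrightarrow> H z"
proof (rule LIMSEQ_I)
  fix e :: real
  assume "0 < e"
  then obtain d where "0 < d"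
    and d: "\<And>z'. z' \<in> Zs \<Longrightarrow> weighted_norm1 w (\<lambda>n. z' n - z n) < d \<Longrightarrow> norm (H z' - H z) < e"
    using assms(1,2) unfolding weighted_continuous_def by blast
  obtain N0 where "\<And>N. N \<ge> N0 \<Longrightarrow> weighted_norm1 w (\<lambda>n. x N n - z n) < d"
    using LIMSEQ_D[OF assms(4) \<open>0 < d\<close>] by fastforce
  with d assms(3) show "\<exists>N0. \<forall>N\<ge>N0. norm (H (x N) - H z) < e" by blast
qed

lemma linear_norm_bound_from_cball:
  assumes "linear f" "0 < r" "\<And>y. norm y \<le> r \<Longrightarrow> norm (f y) \<le> e"
  shows "norm (f x) \<le> e / r * norm x"
proof (cases "x = 0")
  case True
  then show ?thesis using linear_0[OF assms(1)] by simp
next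
  case False
  have "norm ((r / norm x) *\<^sub>R x) = r"
    using False \<open>0 < r\<close> by simp
  then have "norm (f ((r / norm x) *\<^sub>R x)) \<le> e"
    by (intro assms(3)) simp
  then have "r / norm x * norm (f x) \<le> e"
    using \<open>0 < r\<close> by (simp add: linear_scale[OF assms(1)])
  then show ?thesis
    using False \<open>0 < r\<close> by (simp add: field_simps)
qed

text \<open>The factor is \<open>e / r\<close> for \<open>r = min 1 (d / (2 w\<^sub>n))\<close>: on the \<open>r\<close>-ball, \<open>\<delta>\<^sup>n\<close> lands in \<open>Zs\<close>
  and within weighted distance \<open>d\<close> of \<open>0\<close>.\<close>

lemma weighted_continuous_delta_seq_bound:
  fixes L :: "(nat \<Rightarrow> 'z::real_normed_vector) \<Rightarrow> 'y::real_normed_vector"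
  assumes sa: "standing_assumption Zs" and L: "linear_on_span Zs L" and HL: "\<forall>z\<in>Zs. H z = L z"
    and cont: "weighted_continuous w Zs H" and w: "weighting_seq w" and "0 < e"
  obtains d where "0 < d" "\<And>n x. norm (L (delta_seq n x)) \<le> e * max 1 (2 * w n / d) * norm x"
proof -
  have "H (\<lambda>n. 0) = 0"
    using HL zero_seq_in_Zs[OF sa] linear_on_span_zero[OF L] by simp
  then obtain d where "0 < d" and d: "\<And>z'. z' \<in> Zs \<Longrightarrow> weighted_norm1 w z' < d \<Longrightarrow> norm (H z') < e"
    using cont zero_seq_in_Zs[OF sa] \<open>0 < e\<close> unfolding weighted_continuous_def by fastforce
  have "norm (L (delta_seq n x)) \<le> e * max 1 (2 * w n / d) * norm x" for n x
  proof -
    define r where "r = min 1 (d / (2 * w n))"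
    have "0 < w n"
      using w by (rule weighting_seq_pos)
    then have "0 < r"
      using \<open>0 < d\<close> by (simp add: r_def)
    have "norm (L (delta_seq n y)) \<le> e" if "norm y \<le> r" for y
    proof -
      have "norm y \<le> 1"
        using that by (simp add: r_def)
      have "w n * norm y \<le> w n * (d / (2 * w n))"
        using that \<open>0 < w n\<close> by (intro mult_left_mono) (auto simp: r_def)
      also have "\<dots> < d"
        using \<open>0 < w n\<close> \<open>0 < d\<close> by simp
      finally have "norm (H (delta_seq n y)) < e"
        using d delta_seq_in_Zs[OF sa \<open>norm y \<le> 1\<close>] by (simp add: weighted_norm1_delta_seq)
      then show ?thesis
        using HL delta_seq_in_Zs[OF sa \<open>norm y \<le> 1\<close>] by simp
    qed
    then have "norm (L (delta_seq n x)) \<le> e / r * norm x"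
      using linear_norm_bound_from_cball[OF linear_on_span_delta_seq[OF sa L] \<open>0 < r\<close>] by blast
    also have "e / r = e * max 1 (2 * w n / d)"
      using \<open>0 < w n\<close> \<open>0 < d\<close> by (auto simp: r_def min_def max_def field_simps)
    finally show ?thesis .
  qed
  with \<open>0 < d\<close> that show ?thesis by blast
qed

lemma weighted_continuous_delta_kernel:
  fixes L :: "(nat \<Rightarrow> 'z::real_normed_vector) \<Rightarrow> 'y::real_normed_vector"
  assumes sa: "standing_assumption Zs" and L: "linear_on_span Zs L" and HL: "\<forall>z\<in>Zs. H z = L z"
    and cont: "weighted_continuous w Zs H" and w: "weighting_seq w"
  obtains \<kappa> :: "nat \<Rightarrow> ('z \<Rightarrow>\<^sub>L 'y)" where "\<And>n x. \<kappa> n x = L (delta_seq n x)" "(\<lambda>n. norm (\<kappa> n)) \<longlonglongrightarrow> 0"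
proof -
  note bound = weighted_continuous_delta_seq_bound[OF sa L HL cont w]
  obtain d1 where "0 < d1" and d1: "\<And>n x. norm (L (delta_seq n x)) \<le> 1 * max 1 (2 * w n / d1) * norm x"
    by (erule bound[OF zero_less_one])
  have "bounded_linear (\<lambda>x. L (delta_seq n x))" for n
  proof (rule bounded_linear.intro)
    show "linear (\<lambda>x. L (delta_seq n x))"
      by (rule linear_on_span_delta_seq[OF sa L])
    show "bounded_linear_axioms (\<lambda>x. L (delta_seq n x))"
    proof (unfold_locales, intro exI allI)
      show "norm (L (delta_seq n x)) \<le> norm x * max 1 (2 * w n / d1)" for x
        using d1[of n x] by (simp add: mult.commute)
    qed
  qed
  define \<kappa> where "\<kappa> n = Blinfun (\<lambda>x. L (delta_seq n x))" for n
  have \<kappa>_apply: "\<kappa> n x = L (delta_seq n x)" for n x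
    by (simp add: \<kappa>_def bounded_linear_Blinfun_apply[OF \<open>bounded_linear (\<lambda>x. L (delta_seq n x))\<close>])
  have "(\<lambda>n. norm (\<kappa> n)) \<longlonglongrightarrow> 0"
  proof (rule LIMSEQ_I)
    fix e :: real
    assume "0 < e"
    then obtain d where "0 < d" and d: "\<And>n x. norm (\<kappa> n x) \<le> e / 2 * max 1 (2 * w n / d) * norm x"
      using bound[of "e / 2"] unfolding \<kappa>_apply by auto
    have "w \<longlonglongrightarrow> 0"
      using w by (simp add: weighting_seq_def)
    then obtain N where N: "\<And>n. n \<ge> N \<Longrightarrow> w n < d / 2"
      using LIMSEQ_D[of w 0 "d / 2"] \<open>0 < d\<close> weighting_seq_pos[OF w] by fastforce
    have "norm (norm (\<kappa> n) - 0) < e" if "n \<ge> N" for n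
    proof -
      have "max 1 (2 * w n / d) = 1"
        using N[OF that] \<open>0 < d\<close> by (simp add: field_simps)
      then have "norm (\<kappa> n) \<le> e / 2"
        using d[of n] \<open>0 < e\<close> by (intro norm_blinfun_bound) auto
      then show ?thesis
        using \<open>0 < e\<close> by simp
    qed
    then show "\<exists>N. \<forall>n\<ge>N. norm (norm (\<kappa> n) - 0) < e" by blast
  qed
  with \<kappa>_apply that show ?thesis by blast
qed

lemma delta_kernel_convolution_rep:
  fixes \<kappa> :: "nat \<Rightarrow> ('z::real_normed_vector \<Rightarrow>\<^sub>L 'y::real_normed_vector)"
  assumes sa: "standing_assumption Zs" and L: "linear_on_span Zs L" and HL: "\<forall>z\<in>Zs. H z = L z"
    and cont: "weighted_continuous w Zs H" and w: "weighting_seq w" and l1: "\<forall>z\<in>Zs. in_ell1 z"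
    and \<kappa>_apply: "\<And>n x. \<kappa> n x = L (delta_seq n x)" and \<kappa>_le: "\<And>n. norm (\<kappa> n) \<le> B"
  shows "convolution_rep Zs H \<kappa>"
  unfolding convolution_rep_def
proof (intro ballI conjI)
  fix z
  assume "z \<in> Zs"
  then have "in_ell1 z"
    using l1 by blast
  have le: "norm (\<kappa> n (z n)) \<le> B * norm (z n)" for n
    by (rule order_trans[OF norm_blinfun mult_right_mono[OF \<kappa>_le norm_ge_zero]])
  show "summable (\<lambda>n. norm (\<kappa> n (z n)))"
  proof (rule summable_comparison_test'[where g = "\<lambda>n. B * norm (z n)" and N = 0])
    show "summable (\<lambda>n. B * norm (z n))"
      using \<open>in_ell1 z\<close> by (simp add: in_ell1_def summable_mult)
  qed (simp add: le)
  have "(\<lambda>N. H (seq_trunc N z)) \<longlonglongrightarrow> H z"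
    by (rule weighted_continuous_tendsto[OF cont \<open>z \<in> Zs\<close> seq_trunc_in_Zs[OF sa \<open>z \<in> Zs\<close>]
          weighted_norm1_seq_trunc_tendsto[OF w \<open>in_ell1 z\<close>]])
  moreover have "H (seq_trunc N z) = (\<Sum>n\<le>N. \<kappa> n (z n))" for N
    using HL seq_trunc_in_Zs[OF sa \<open>z \<in> Zs\<close>] linear_on_span_seq_trunc[OF sa L \<open>z \<in> Zs\<close>]
    by (simp add: \<kappa>_apply)
  ultimately show "(\<lambda>N. \<Sum>n\<le>N. \<kappa> n (z n)) \<longlonglongrightarrow> H z"
    by simp
qed

lemma FMP1_imp_convolution_rep:
  fixes H :: "(nat \<Rightarrow> 'z::real_normed_vector) \<Rightarrow> 'y::real_normed_vector"
  assumes sa: "standing_assumption Zs" and "linear_functional Zs H" and "FMP1 Zs H"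
  shows "\<exists>\<kappa>. convolution_rep Zs H \<kappa> \<and> (\<lambda>n. norm (\<kappa> n)) \<longlonglongrightarrow> 0"
proof -
  obtain w where l1: "\<forall>z\<in>Zs. in_ell1 z" and w: "weighting_seq w" and cont: "weighted_continuous w Zs H"
    using \<open>FMP1 Zs H\<close> by (auto simp: FMP1_iff)
  obtain L where L: "linear_on_span Zs L" and HL: "\<forall>z\<in>Zs. H z = L z"
    using \<open>linear_functional Zs H\<close> by (auto simp: linear_functional_iff)
  obtain \<kappa> :: "nat \<Rightarrow> ('z \<Rightarrow>\<^sub>L 'y)" where \<kappa>_apply: "\<And>n x. \<kappa> n x = L (delta_seq n x)" and \<kappa>_0: "(\<lambda>n. norm (\<kappa> n)) \<longlonglongrightarrow> 0"
    using weighted_continuous_delta_kernel[OF sa L HL cont w] by blast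
  obtain B where "\<And>n. norm (\<kappa> n) \<le> B"
    using convergent_imp_Bseq[OF convergentI[OF \<kappa>_0]] by (auto simp: Bseq_def)
  then have "convolution_rep Zs H \<kappa>"
    by (rule delta_kernel_convolution_rep[OF sa L HL cont w l1 \<kappa>_apply])
  with \<kappa>_0 show ?thesis by blast
qed

theorem proposition3p5:
  fixes Zs :: "(nat \<Rightarrow> 'z::real_normed_vector) set"
    and H :: "(nat \<Rightarrow> 'z) \<Rightarrow> 'y::real_normed_vector"
  assumes "standing_assumption Zs"
    and "\<forall>z\<in>Zs. in_ell1 z"
    and "linear_functional Zs H"
  shows "FMP1 Zs H \<longleftrightarrow>
         (\<exists>\<kappa>. convolution_rep Zs H \<kappa> \<and> (\<lambda>n. norm (\<kappa> n)) \<longlonglongrightarrow> 0)"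
  using FMP1_imp_convolution_rep[OF assms(1,3)] convolution_rep_imp_FMP1[OF assms(2)] by blast

end
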